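(* Let $\alpha\in(0,1]$. For all $n$ such that $n^\alpha=2^q$ for a positive integer $q$, the sparse grid $B_n$ satisfies $|B_n|=O(n^{2-\alpha}\log n)$.
   Context: Assume $n^\alpha=2^q$ with $q$ a positive integer (so $n^\alpha$ is an integer). Let $A_n=\{(i,j)\in\mathbb{Z}^2: 0\le i,j\le 14n\}$. The sparse grid $B_n\subseteq A_n$ is the set of points of $A_n$ of at least one of the following forms: (1) $(i,j)$ with $n^\alpha \mid ij$; (2) $(i+k,j+k)$ with $n^\alpha\mid i$, $n^\alpha\mid j$ and $k\in\{1,2,\dots,n^\alpha\}$ (points on forward diagonals); (3) $(i+k,j-k)$ with $n^\alpha\mid i$, $n^\alpha\mid j$ and $k\in\{1,2,\dots,n^\alpha\}$ (points on backward diagonals). *)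

theory Defs
  imports Complex_Main
begin

definition A_grid :: "nat \<Rightarrow> (int \<times> int) set" where
  "A_grid n = {(i, j). 0 \<le> i \<and> i \<le> 14 * int n \<and> 0 \<le> j \<and> j \<le> 14 * int n}"

text \<open>The sparse grid B_n, where m stands for the integer n^alpha.\<close>
definition sparse_grid :: "nat \<Rightarrow> nat \<Rightarrow> (int \<times> int) set" where
  "sparse_grid n m = {p \<in> A_grid n.
     (\<exists>i j. p = (i, j) \<and> int m dvd i * j)
   \<or> (\<exists>i j k. int m dvd i \<and> int m dvd j \<and> 1 \<le> k \<and> k \<le> int m \<and> p = (i + k, j + k))
   \<or> (\<exists>i j k. int m dvd i \<and> int m dvd j \<and> 1 \<le> k \<and> k \<le> int m \<and> p = (i + k, j - k))}"

end

theory Submission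
  imports Defs "HOL-Computational_Algebra.Primes"
begin

text \<open>Write \<open>m = 2^q\<close> and \<open>L = 14n\<close>. The diagonal points of \<open>B\<^sub>n\<close> are images of triples
  \<open>(i, j, k)\<close> with \<open>i, j\<close> among the \<open>O(L/m)\<close> multiples of \<open>m\<close> near \<open>[0, L]\<close> and \<open>1 \<le> k \<le> m\<close>,
  so there are \<open>O(L\<^sup>2/m + L + m)\<close> of them. A point with \<open>2^q | ij\<close> has \<open>2^k | i\<close> and
  \<open>2^(q-k) | j\<close> for some \<open>k \<le> q\<close>, and each of these \<open>q + 1\<close> rectangular lattices has
  \<open>O(L\<^sup>2/2^q + L)\<close> points. Since \<open>m = n^\<alpha> \<le> n\<close> and \<open>q \<le> log\<^sub>2 n\<close>, the total is
  \<open>O(n^(2-\<alpha>) log n)\<close>.\<close>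

lemma card_multiples_le:
  fixes a b d :: int
  assumes "0 < d" "a \<le> b"
  shows "real (card {i \<in> {a..b}. d dvd i}) \<le> (b - a) / d + 2"
proof -
  have "{i \<in> {a..b}. d dvd i} \<subseteq> (\<lambda>t. d * t) ` {a div d .. b div d}"
  proof
    fix i assume "i \<in> {i \<in> {a..b}. d dvd i}"
    then obtain t where "i = d * t" "a \<le> d * t" "d * t \<le> b" by auto
    then show "i \<in> (\<lambda>t. d * t) ` {a div d .. b div d}"
      using zdiv_mono1[of a "d * t" d] zdiv_mono1[of "d * t" b d] assms(1) by auto
  qed
  then have "card {i \<in> {a..b}. d dvd i} \<le> card {a div d .. b div d}"
    by (meson card_image_le card_mono finite_atLeastAtMost_int finite_imageI order_trans)
  also have "\<dots> = nat (b div d + 1 - a div d)" by simp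
  finally have "real (card {i \<in> {a..b}. d dvd i}) \<le> real_of_int (b div d + 1 - a div d)"
    using zdiv_mono1[OF assms(2,1)] by linarith
  moreover have "real_of_int (b div d) \<le> b / d" "a / d - 1 < real_of_int (a div d)"
    using floor_divide_of_int_eq[of b d] floor_divide_of_int_eq[of a d]
      of_int_floor_le[of "b / d"] real_of_int_floor_gt_diff_one[of "a / d"]
    by metis+
  ultimately show ?thesis by (simp add: diff_divide_distrib)
qed

lemma prime_power_dvd_mult_split:
  fixes p a b :: "'a :: algebraic_semidom"
  assumes "prime_elem p" "p ^ q dvd a * b"
  shows "\<exists>k\<le>q. p ^ k dvd a \<and> p ^ (q - k) dvd b"
  using assms(2)
proof (induction q arbitrary: a)
  case 0
  then show ?case by auto
next
  case (Suc q)
  show ?case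
  proof (cases "p dvd a")
    case True
    then obtain a' where a: "a = p * a'" by (elim dvdE)
    have "p ^ q dvd a' * b"
      using Suc.prems prime_elem_not_zeroI[OF assms(1)] by (simp add: a mult.assoc)
    then obtain k where "k \<le> q" "p ^ k dvd a'" "p ^ (q - k) dvd b" using Suc.IH by blast
    then show ?thesis by (intro exI[of _ "Suc k"]) (auto simp: a mult_dvd_mono)
  next
    case False
    then have "p ^ Suc q dvd b" using prime_power_dvd_multD[OF assms(1) Suc.prems] by simp
    then show ?thesis by (intro exI[of _ 0]) auto
  qed
qed

lemma card_divisible_products_le:
  fixes p L :: int
  assumes "prime p" "0 \<le> L"
  shows "real (card {(i, j) \<in> {0..L} \<times> {0..L}. p ^ q dvd i * j})
           \<le> (real q + 1) * (L\<^sup>2 / p ^ q + 4 * L + 4)"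
proof -
  let ?R = "\<lambda>k. {i \<in> {0..L}. p ^ k dvd i}"
  have p2: "2 \<le> p" using assms(1) prime_ge_2_int by blast
  have card_R: "real (card (?R k)) \<le> L / p ^ k + 2" for k
    using card_multiples_le[of "p ^ k" 0 L] p2 assms(2) by simp
  have finite_R: "finite (?R k)" for k by (rule finite_subset[of _ "{0..L}"]) auto
  have "{(i, j) \<in> {0..L} \<times> {0..L}. p ^ q dvd i * j} \<subseteq> (\<Union>k\<le>q. ?R k \<times> ?R (q - k))"
  proof clarify
    fix i j assume "i \<in> {0..L}" "j \<in> {0..L}" "p ^ q dvd i * j"
    moreover obtain k where "k \<le> q" "p ^ k dvd i" "p ^ (q - k) dvd j"
      using prime_power_dvd_mult_split[OF _ \<open>p ^ q dvd i * j\<close>] assms(1) by blast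
    ultimately show "(i, j) \<in> (\<Union>k\<le>q. ?R k \<times> ?R (q - k))" by blast
  qed
  then have "card {(i, j) \<in> {0..L} \<times> {0..L}. p ^ q dvd i * j} \<le> card (\<Union>k\<le>q. ?R k \<times> ?R (q - k))"
    using finite_R by (intro card_mono) auto
  also have "\<dots> \<le> (\<Sum>k\<le>q. card (?R k \<times> ?R (q - k)))" by (rule card_UN_le) simp
  finally have "card {(i, j) \<in> {0..L} \<times> {0..L}. p ^ q dvd i * j} \<le> (\<Sum>k\<le>q. card (?R k \<times> ?R (q - k)))" .
  then have "real (card {(i, j) \<in> {0..L} \<times> {0..L}. p ^ q dvd i * j})
               \<le> (\<Sum>k\<le>q. real (card (?R k)) * real (card (?R (q - k))))"
    by (simp add: card_cartesian_product flip: of_nat_mult of_nat_sum)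
  also have "\<dots> \<le> (\<Sum>k\<le>q. L\<^sup>2 / p ^ q + 4 * L + 4)"
  proof (rule sum_mono)
    fix k assume "k \<in> {..q}"
    have shrink: "L / p ^ j \<le> L" for j
      using p2 assms(2) by (simp add: divide_le_eq mult_le_cancel_left1 one_le_power)
    have "real (card (?R k)) * real (card (?R (q - k))) \<le> (L / p ^ k + 2) * (L / p ^ (q - k) + 2)"
      using card_R assms(2) p2 by (intro mult_mono) auto
    also have "\<dots> = L\<^sup>2 / (p ^ k * p ^ (q - k)) + 2 * (L / p ^ k) + 2 * (L / p ^ (q - k)) + 4"
      using p2 by (simp add: field_simps power2_eq_square)
    also have "p ^ k * p ^ (q - k) = p ^ q"
      using \<open>k \<in> {..q}\<close> by (simp flip: power_add)
    finally show "real (card (?R k)) * real (card (?R (q - k))) \<le> L\<^sup>2 / p ^ q + 4 * L + 4"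
      using shrink[of k] shrink[of "q - k"] by simp
  qed
  finally show ?thesis by (simp add: algebra_simps)
qed

definition diagonal_seeds :: "int \<Rightarrow> int \<Rightarrow> (int \<times> int \<times> int) set" where
  "diagonal_seeds L m =
     {i \<in> {-m..L + m}. m dvd i} \<times> {j \<in> {-m..L + m}. m dvd j} \<times> {1..m}"

lemma finite_diagonal_seeds: "finite (diagonal_seeds L m)"
  unfolding diagonal_seeds_def by (intro finite_cartesian_product finite_Collect_conjI disjI1) simp_all

lemma card_diagonal_seeds_le:
  fixes L m :: int
  assumes "0 < m" "0 \<le> L"
  shows "real (card (diagonal_seeds L m)) \<le> L\<^sup>2 / m + 8 * L + 16 * m"
proof -
  have "real (card {i \<in> {-m..L + m}. m dvd i}) \<le> (L + m - (-m)) / m + 2"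
    using card_multiples_le[of m "-m" "L + m"] assms by simp
  also have "\<dots> = L / m + 4" using assms by (simp add: field_simps)
  finally have "real (card (diagonal_seeds L m)) \<le> (L / m + 4) * (L / m + 4) * m"
    using assms by (simp add: diagonal_seeds_def card_cartesian_product mult_mono)
  also have "\<dots> = L\<^sup>2 / m + 8 * L + 16 * m"
    using assms by (simp add: field_simps power2_eq_square)
  finally show ?thesis .
qed

lemma sparse_grid_subset:
  fixes n m :: nat
  defines "L \<equiv> 14 * int n"
  shows "sparse_grid n m \<subseteq> {(i, j) \<in> {0..L} \<times> {0..L}. int m dvd i * j}
           \<union> (\<lambda>(i, j, k). (i + k, j + k)) ` diagonal_seeds L (int m)
           \<union> (\<lambda>(i, j, k). (i + k, j - k)) ` diagonal_seeds L (int m)"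
proof
  fix p assume p: "p \<in> sparse_grid n m"
  then have box: "p \<in> {0..L} \<times> {0..L}"
    by (auto simp: sparse_grid_def A_grid_def L_def)
  have seed: "(i, j, k) \<in> diagonal_seeds L (int m)"
    if "int m dvd i" "int m dvd j" "1 \<le> k" "k \<le> int m" "i + k \<in> {0..L}"
      "j + k \<in> {0..L} \<or> j - k \<in> {0..L}" for i j k
    using that by (auto simp: diagonal_seeds_def)
  from p consider (hyperbolic) i j where "p = (i, j)" "int m dvd i * j"
    | (forward) i j k where "int m dvd i" "int m dvd j" "1 \<le> k" "k \<le> int m" "p = (i + k, j + k)"
    | (backward) i j k where "int m dvd i" "int m dvd j" "1 \<le> k" "k \<le> int m" "p = (i + k, j - k)"
    unfolding sparse_grid_def by blast
  then show "p \<in> {(i, j) \<in> {0..L} \<times> {0..L}. int m dvd i * j}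
           \<union> (\<lambda>(i, j, k). (i + k, j + k)) ` diagonal_seeds L (int m)
           \<union> (\<lambda>(i, j, k). (i + k, j - k)) ` diagonal_seeds L (int m)"
  proof cases
    case hyperbolic
    then show ?thesis using box by auto
  next
    case forward
    then have "p \<in> (\<lambda>(i, j, k). (i + k, j + k)) ` diagonal_seeds L (int m)"
      using box seed[of i j k] by (auto intro: rev_image_eqI[of "(i, j, k)"])
    then show ?thesis by blast
  next
    case backward
    then have "p \<in> (\<lambda>(i, j, k). (i + k, j - k)) ` diagonal_seeds L (int m)"
      using box seed[of i j k] by (auto intro: rev_image_eqI[of "(i, j, k)"])
    then show ?thesis by blast
  qed
qed

lemma card_sparse_grid_le:
  fixes n q :: nat
  defines "N \<equiv> 14 * real n" and "M \<equiv> (2::real) ^ q"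
  shows "real (card (sparse_grid n (2 ^ q)))
           \<le> (real q + 1) * (N\<^sup>2 / M + 4 * N + 4) + 2 * (N\<^sup>2 / M + 8 * N + 16 * M)"
proof -
  let ?L = "14 * int n" and ?m = "int (2 ^ q)"
  let ?H = "{(i, j) \<in> {0..?L} \<times> {0..?L}. ?m dvd i * j}"
  let ?D = "\<lambda>f :: int \<times> int \<times> int \<Rightarrow> int \<times> int. f ` diagonal_seeds ?L ?m"
  have diag: "real (card (?D f)) \<le> N\<^sup>2 / M + 8 * N + 16 * M" for f
    using card_image_le[OF finite_diagonal_seeds, of f ?L ?m]
      card_diagonal_seeds_le[of ?m ?L] by (simp add: N_def M_def)
  have hyp: "real (card ?H) \<le> (real q + 1) * (N\<^sup>2 / M + 4 * N + 4)"
    using card_divisible_products_le[of 2 ?L q] by (simp add: N_def M_def)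
  let ?F = "?D (\<lambda>(i, j, k). (i + k, j + k))" and ?G = "?D (\<lambda>(i, j, k). (i + k, j - k))"
  have "finite ?H" by (rule finite_subset[of _ "{0..?L} \<times> {0..?L}"]) auto
  then have "card (sparse_grid n (2 ^ q)) \<le> card (?H \<union> ?F \<union> ?G)"
    using sparse_grid_subset[of n "2 ^ q"] by (intro card_mono) (auto simp: finite_diagonal_seeds)
  also have "\<dots> \<le> card (?H \<union> ?F) + card ?G" by (rule card_Un_le)
  also have "\<dots> \<le> card ?H + card ?F + card ?G" using card_Un_le by (intro add_mono) auto
  finally have "real (card (sparse_grid n (2 ^ q))) \<le> real (card ?H) + real (card ?F) + real (card ?G)"
    by (simp flip: of_nat_add)
  also have "\<dots> \<le> (real q + 1) * (N\<^sup>2 / M + 4 * N + 4)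
      + (N\<^sup>2 / M + 8 * N + 16 * M) + (N\<^sup>2 / M + 8 * N + 16 * M)"
    by (intro add_mono hyp diag)
  finally show ?thesis by simp
qed

lemma two_le_of_powr_eq_power:
  fixes n q :: nat
  assumes "0 < q" "real n powr \<alpha> = 2 ^ q"
  shows "2 \<le> n"
proof (rule ccontr)
  assume "\<not> 2 \<le> n"
  then consider "n = 0" | "n = 1" by linarith
  then have "real n powr \<alpha> \<le> 1" by cases auto
  moreover have "(2::real) ^ q \<ge> 2" using assms(1) by (simp add: self_le_power)
  ultimately show False using assms(2) by simp
qed

lemma exponent_le_log2:
  fixes x \<alpha> :: real
  assumes "\<alpha> \<le> 1" "1 < x" "x powr \<alpha> = 2 ^ q"
  shows "real q \<le> log 2 x"
proof -
  have "real q * ln 2 = \<alpha> * ln x"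
    using arg_cong[OF assms(3), of ln] assms(2) by (simp add: ln_powr ln_realpow)
  also have "\<dots> \<le> ln x" using assms(1,2) by (simp add: mult_le_cancel_right1)
  finally show ?thesis by (simp add: log_def le_divide_eq)
qed

lemma card_sparse_grid_le_powr:
  fixes \<alpha> :: real and n q :: nat
  assumes "\<alpha> \<le> 1" "0 < q" "real n powr \<alpha> = 2 ^ q"
  shows "real (card (sparse_grid n (2 ^ q))) \<le> 1160 * real q * real n powr (2 - \<alpha>)"
proof -
  define P where "P = real n powr (2 - \<alpha>)"
  have n: "1 < real n" using two_le_of_powr_eq_power[OF assms(2,3)] by simp
  have "(14 * real n)\<^sup>2 / 2 ^ q = 196 * (real n powr 2 / real n powr \<alpha>)"
    using n by (simp add: power2_eq_square powr_realpow flip: assms(3))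
  also have "\<dots> = 196 * P" using n by (simp add: P_def powr_diff)
  finally have quotient: "(14 * real n)\<^sup>2 / 2 ^ q = 196 * P" .
  have n_P: "real n \<le> P" using powr_mono[of 1 "2 - \<alpha>" "real n"] n assms(1) by (simp add: P_def)
  have m_P: "(2::real) ^ q \<le> P"
    using powr_mono[of \<alpha> "2 - \<alpha>" "real n"] n assms(1) by (simp add: P_def flip: assms(3))
  have "196 * P + 4 * (14 * real n) + 4 \<le> 256 * P" using n n_P by linarith
  then have "(real q + 1) * (196 * P + 4 * (14 * real n) + 4) \<le> (real q + 1) * (256 * P)"
    by (rule mult_left_mono) simp
  also have "\<dots> = 256 * (real q * P) + 256 * P" by (simp add: algebra_simps)
  finally have "(real q + 1) * (196 * P + 4 * (14 * real n) + 4) \<le> 256 * (real q * P) + 256 * P" .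
  moreover have "2 * (196 * P + 8 * (14 * real n) + 16 * 2 ^ q) \<le> 648 * P"
    using mult_left_mono[OF m_P, of 32] n_P by simp
  moreover have "P \<le> real q * P" using assms(2) n by (simp add: P_def)
  ultimately have "(real q + 1) * (196 * P + 4 * (14 * real n) + 4)
      + 2 * (196 * P + 8 * (14 * real n) + 16 * 2 ^ q) \<le> 1160 * (real q * P)"
    by linarith
  moreover have "real (card (sparse_grid n (2 ^ q)))
      \<le> (real q + 1) * (196 * P + 4 * (14 * real n) + 4) + 2 * (196 * P + 8 * (14 * real n) + 16 * 2 ^ q)"
    using card_sparse_grid_le[of n q] unfolding quotient .
  ultimately show ?thesis by (simp add: P_def mult.assoc)
qed

theorem lemma3:
  fixes \<alpha> :: real
  assumes "0 < \<alpha>" and "\<alpha> \<le> 1"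
  shows "\<exists>C. \<forall>(n::nat) (q::nat). 0 < q \<and> real n powr \<alpha> = 2 ^ q \<longrightarrow>
           real (card (sparse_grid n (2 ^ q))) \<le> C * real n powr (2 - \<alpha>) * ln (real n)"
proof (intro exI[of _ "1160 / ln 2"] allI impI, elim conjE)
  fix n q :: nat
  assume q: "0 < q" and n_q: "real n powr \<alpha> = 2 ^ q"
  have n: "1 < real n" using two_le_of_powr_eq_power[OF q n_q] by simp
  have "real (card (sparse_grid n (2 ^ q))) \<le> 1160 * real q * real n powr (2 - \<alpha>)"
    using card_sparse_grid_le_powr[OF assms(2) q n_q] .
  also have "\<dots> \<le> 1160 * log 2 (real n) * real n powr (2 - \<alpha>)"
    using exponent_le_log2[OF assms(2) n n_q] by (intro mult_right_mono) auto
  also have "\<dots> = 1160 / ln 2 * real n powr (2 - \<alpha>) * ln (real n)"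
    by (simp add: log_def)
  finally show "real (card (sparse_grid n (2 ^ q))) \<le> 1160 / ln 2 * real n powr (2 - \<alpha>) * ln (real n)" .
qed

end
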